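(* Let $S_0,S_1,S_2\subseteq\{0,1,2\}^m$ be a meta-extendable collection of admissible sets, and let $T\subseteq\{0,1,2\}^r$ be admissible. Then \[T(S_0,S_1,S_2)=\bigcup_{t\in T} S_{t_1}\times\cdots\times S_{t_r}\subseteq\{0,1,2\}^{mr}\] is an admissible set.
   Context: A set $S\subseteq\{0,1,2\}^m$ is admissible if (1) for all distinct $s,s'\in S$ there are coordinates $i,j$ with $s_i=0\neq s'_i$ and $s_j\neq 0=s'_j$; and (2) for all distinct $s,s',s''\in S$ there is a coordinate $k$ such that the multiset $\{s_k,s'_k,s''_k\}$ equals $\{0,1,2\}$, $\{0,0,1\}$ or $\{0,0,2\}$. The weight of a vector is its number of nonzero coordinates. A collection $S_0,S_1,S_2\subseteq\{0,1,2\}^m$ of admissible sets is meta-extendable if: (1) for any $s\in S_0$ and $s'\in S_1\cup S_2$, the weight of $s$ is less than the weight of $s'$; (2) whenever $x,y\in S_0$ (not necessarily distinct) and $z\in S_1\cup S_2$, there is a coordinate $k$ with the multiset $\{x_k,y_k,z_k\}$ equal to $\{0,1,2\}$, $\{0,0,1\}$ or $\{0,0,2\}$; (3) whenever $x\in S_0$, $y\in S_1$, $z\in S_2$, there is a coordinate $k$ with the multiset $\{x_k,y_k,z_k\}$ equal to $\{0,1,2\}$, $\{0,0,1\}$ or $\{0,0,2\}$. Products $S_{t_1}\times\cdots\times S_{t_r}$ consist of concatenations of vectors. *)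

theory Defs
  imports Main "HOL-Library.Multiset"
begin

definition ternary_vecs :: "nat \<Rightarrow> nat list set" where
  "ternary_vecs m = {s. length s = m \<and> set s \<subseteq> {0,1,2}}"

definition good3 :: "nat \<Rightarrow> nat \<Rightarrow> nat \<Rightarrow> bool" where
  "good3 a b c \<longleftrightarrow> {#a, b, c#} \<in> {{#0,1,2#}, {#0,0,1#}, {#0,0,2#}}"

definition weight :: "nat list \<Rightarrow> nat" where
  "weight s = length (filter (\<lambda>x. x \<noteq> 0) s)"

definition admissible :: "nat \<Rightarrow> nat list set \<Rightarrow> bool" where
  "admissible m S \<longleftrightarrow>
     S \<subseteq> ternary_vecs m \<and>
     (\<forall>s\<in>S. \<forall>s'\<in>S. s \<noteq> s' \<longrightarrow>
        (\<exists>i<m. s ! i = 0 \<and> s' ! i \<noteq> 0) \<and> (\<exists>j<m. s ! j \<noteq> 0 \<and> s' ! j = 0)) \<and>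
     (\<forall>s\<in>S. \<forall>s'\<in>S. \<forall>s''\<in>S. s \<noteq> s' \<and> s \<noteq> s'' \<and> s' \<noteq> s'' \<longrightarrow>
        (\<exists>k<m. good3 (s ! k) (s' ! k) (s'' ! k)))"

definition meta_extendable :: "nat \<Rightarrow> (nat \<Rightarrow> nat list set) \<Rightarrow> bool" where
  "meta_extendable m S \<longleftrightarrow>
     admissible m (S 0) \<and> admissible m (S 1) \<and> admissible m (S 2) \<and>
     (\<forall>s\<in>S 0. \<forall>s'\<in>S 1 \<union> S 2. weight s < weight s') \<and>
     (\<forall>x\<in>S 0. \<forall>y\<in>S 0. \<forall>z\<in>S 1 \<union> S 2. \<exists>k<m. good3 (x ! k) (y ! k) (z ! k)) \<and>
     (\<forall>x\<in>S 0. \<forall>y\<in>S 1. \<forall>z\<in>S 2. \<exists>k<m. good3 (x ! k) (y ! k) (z ! k))"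

definition compose :: "nat list set \<Rightarrow> (nat \<Rightarrow> nat list set) \<Rightarrow> nat list set" where
  "compose T S = (\<Union>t\<in>T. {concat xs | xs. length xs = length t \<and>
                                         (\<forall>i<length t. xs ! i \<in> S (t ! i))})"

end

theory Submission
  imports Defs
begin

text \<open>A vector of T(S_0,S_1,S_2) is a concatenation of r blocks whose i-th block lies in
  S_{t_i} for a pattern t \<in> T. Given two or three distinct such vectors, either their patterns
  coincide, and admissibility of S_{t_i} applies in a block i where the vectors differ, or they
  do not, and admissibility of T yields a position i where the patterns are separated. In the
  latter case meta-extendability transfers this to the blocks at position i: the weight
  condition turns t_i = 0 \<noteq> t'_i into a coordinate where the first block vanishes and the
  second does not, and since goodness of a triple is symmetric, it suffices to treat the sorted
  patterns (0,1,2) and (0,0,z), which are exactly conditions (3) and (2).\<close>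

lemma good3_swap12: "good3 a b c \<longleftrightarrow> good3 b a c"
  unfolding good3_def by (simp add: add_mset_commute)

lemma good3_swap23: "good3 a b c \<longleftrightarrow> good3 a c b"
  unfolding good3_def by (simp add: add_mset_commute)

lemma good3_zero_zero: "z \<in> {1, 2} \<Longrightarrow> good3 0 0 z"
  unfolding good3_def by auto

lemma good3_sorted_iff:
  assumes "p \<le> q" "q \<le> s"
  shows "good3 p q s \<longleftrightarrow> (p, q, s) \<in> {(0, 1, 2), (0, 0, 1), (0, 0, 2)}"
proof
  assume "good3 p q s"
  then have "mset [p, q, s] \<in> mset ` {[0, 1, 2], [0, 0, 1], [0, 0, 2]}"
    unfolding good3_def by simp
  then obtain xs where "xs \<in> {[0, 1, 2], [0, 0, 1], [0, 0, 2]}" "mset [p, q, s] = mset xs"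
    by blast
  moreover have "sort xs = [p, q, s]" if "mset [p, q, s] = mset xs"
    using that assms by (intro properties_for_sort) auto
  ultimately show "(p, q, s) \<in> {(0, 1, 2), (0, 0, 1), (0, 0, 2)}" by auto
qed (auto simp: good3_def)

lemma linorder_wlog3:
  fixes p q s :: "'a::linorder"
  assumes "\<And>p q s. P p q s \<Longrightarrow> P q p s" "\<And>p q s. P p q s \<Longrightarrow> P p s q"
    and "\<And>p q s. p \<le> q \<Longrightarrow> q \<le> s \<Longrightarrow> P p q s"
  shows "P p q s"
proof (rule le_cases3[of p q s])
  show "P p q s" if "p \<le> q" "q \<le> s" using assms(3)[OF that] .
  show "P p q s" if "q \<le> p" "p \<le> s" using assms(1)[OF assms(3)[OF that]] .
  show "P p q s" if "p \<le> s" "s \<le> q" using assms(2)[OF assms(3)[OF that]] .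
  show "P p q s" if "q \<le> s" "s \<le> p" using assms(1)[OF assms(2)[OF assms(3)[OF that]]] .
  show "P p q s" if "s \<le> p" "p \<le> q" using assms(2)[OF assms(1)[OF assms(3)[OF that]]] .
  show "P p q s" if "s \<le> q" "q \<le> p"
    using assms(1)[OF assms(2)[OF assms(1)[OF assms(3)[OF that]]]] .
qed

lemma ternary_vecs_length: "v \<in> ternary_vecs m \<Longrightarrow> length v = m"
  unfolding ternary_vecs_def by simp

lemma ternary_vecs_nth: "v \<in> ternary_vecs m \<Longrightarrow> k < m \<Longrightarrow> v ! k \<in> {0, 1, 2}"
  unfolding ternary_vecs_def using nth_mem by blast

lemma weight_less_imp_zero_nonzero:
  assumes "length a = length b" "weight a < weight b"
  shows "\<exists>k<length a. a ! k = 0 \<and> b ! k \<noteq> 0"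
proof (rule ccontr)
  assume "\<not> ?thesis"
  then have "{k. k < length b \<and> b ! k \<noteq> 0} \<subseteq> {k. k < length a \<and> a ! k \<noteq> 0}"
    using assms(1) by auto
  then have "card {k. k < length b \<and> b ! k \<noteq> 0} \<le> card {k. k < length a \<and> a ! k \<noteq> 0}"
    by (intro card_mono) auto
  then show False
    using assms(2) unfolding weight_def length_filter_conv_card by simp
qed

lemma admissible_subset: "admissible m X \<Longrightarrow> X \<subseteq> ternary_vecs m"
  unfolding admissible_def by blast

lemma admissible_zero_nonzero:
  assumes "admissible m X" "a \<in> X" "b \<in> X" "a \<noteq> b"
  shows "\<exists>k<m. a ! k = 0 \<and> b ! k \<noteq> 0"
  using assms unfolding admissible_def by blast

lemma admissible_good3_distinct:
  assumes "admissible m X" "a \<in> X" "b \<in> X" "c \<in> X" "a \<noteq> b" "a \<noteq> c" "b \<noteq> c"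
  shows "\<exists>k<m. good3 (a ! k) (b ! k) (c ! k)"
  using assms(1) unfolding admissible_def
proof (elim conjE)
  assume "\<forall>s\<in>X. \<forall>s'\<in>X. \<forall>s''\<in>X. s \<noteq> s' \<and> s \<noteq> s'' \<and> s' \<noteq> s'' \<longrightarrow>
    (\<exists>k<m. good3 (s ! k) (s' ! k) (s'' ! k))"
  then show ?thesis using assms(2-) by blast
qed

text \<open>If two of the vectors coincide, a coordinate where the repeated vector vanishes and the
  third does not has the pattern {0,0,z}.\<close>

lemma admissible_good3:
  assumes X: "admissible m X" and "a \<in> X" "b \<in> X" "c \<in> X" "a \<noteq> b \<or> b \<noteq> c"
  shows "\<exists>k<m. good3 (a ! k) (b ! k) (c ! k)"
proof -
  have zero_zero: "\<exists>k<m. x ! k = 0 \<and> good3 0 0 (y ! k)" if xy: "x \<in> X" "y \<in> X" "x \<noteq> y" for x y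
  proof -
    obtain k where "k < m" "x ! k = 0" "y ! k \<noteq> 0"
      using admissible_zero_nonzero[OF X xy] by blast
    moreover have "y ! k \<in> {0, 1, 2}"
      using \<open>k < m\<close> \<open>y \<in> X\<close> admissible_subset[OF X] ternary_vecs_nth by blast
    ultimately show ?thesis using good3_zero_zero by auto
  qed
  consider "a \<noteq> b" "a \<noteq> c" "b \<noteq> c" | "a = b" "b \<noteq> c" | "a = c" "a \<noteq> b" | "b = c" "a \<noteq> b"
    using assms(5) by blast
  then show ?thesis
  proof cases
    case 1
    then show ?thesis using admissible_good3_distinct assms(1-4) by blast
  next
    case 2
    then show ?thesis using zero_zero[of b c] assms(3,4) by auto
  next
    case 3
    then show ?thesis using zero_zero[of a b] assms(2,3) good3_swap23 by auto
  next
    case 4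
    then show ?thesis using zero_zero[of b a] assms(2,3) good3_swap12 good3_swap23 by metis
  qed
qed

lemma meta_extendable_admissible:
  assumes "meta_extendable m S" "j \<in> {0, 1, 2}"
  shows "admissible m (S j)"
  using assms unfolding meta_extendable_def by (elim conjE) blast

lemma meta_extendable_weight_less:
  "meta_extendable m S \<Longrightarrow> x \<in> S 0 \<Longrightarrow> y \<in> S 1 \<union> S 2 \<Longrightarrow> weight x < weight y"
  unfolding meta_extendable_def by blast

lemma meta_extendable_good3:
  assumes ME: "meta_extendable m S" and "good3 p q s" "a \<in> S p" "b \<in> S q" "c \<in> S s"
  shows "\<exists>k<m. good3 (a ! k) (b ! k) (c ! k)"
proof -
  let ?P = "\<lambda>p q s. good3 p q s \<longrightarrow> (\<forall>a\<in>S p. \<forall>b\<in>S q. \<forall>c\<in>S s. \<exists>k<m. good3 (a ! k) (b ! k) (c ! k))"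
  have "?P p q s"
  proof (rule linorder_wlog3[of ?P])
    show "?P q p s" if "?P p q s" for p q s
      using that good3_swap12 by blast
    show "?P p s q" if "?P p q s" for p q s
      using that good3_swap23 by blast
    show "?P p q s" if "p \<le> q" "q \<le> s" for p q s
      using ME unfolding good3_sorted_iff[OF that] meta_extendable_def by auto
  qed
  then show ?thesis using assms(2-5) by blast
qed

lemma nth_concat_blocks:
  assumes "\<forall>x\<in>set xs. length x = m" "i < length xs" "k < m"
  shows "concat xs ! (i * m + k) = xs ! i ! k"
  using assms
proof (induction xs arbitrary: i)
  case (Cons x xs)
  then show ?case by (cases i) (auto simp: nth_append add.assoc)
qed simp

lemma block_index_less: "i < r \<Longrightarrow> k < m \<Longrightarrow> i * m + k < m * (r::nat)"
proof -
  assume "i < r" "k < m"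
  then have "i * m + k < Suc i * m" by simp
  also have "\<dots> \<le> r * m" using \<open>i < r\<close> by (intro mult_le_mono1) simp
  finally show ?thesis by (simp add: mult.commute)
qed

lemma composeE:
  assumes "u \<in> compose T S"
  obtains t xs where "t \<in> T" "list_all2 (\<lambda>x j. x \<in> S j) xs t" "u = concat xs"
proof -
  from assms obtain t xs where t: "t \<in> T" "u = concat xs"
    and xs: "length xs = length t" "\<forall>i<length t. xs ! i \<in> S (t ! i)"
    unfolding compose_def by blast
  from xs have "list_all2 (\<lambda>x j. x \<in> S j) xs t" by (simp add: list_all2_conv_all_nth)
  with t that show thesis by blast
qed

context
  fixes m r :: nat and S :: "nat \<Rightarrow> nat list set" and T :: "nat list set"
  assumes ME: "meta_extendable m S" and AT: "admissible r T"
begin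

lemma blocksD:
  assumes "t \<in> T" "list_all2 (\<lambda>x j. x \<in> S j) xs t"
  shows "length xs = r" "\<And>i. i < r \<Longrightarrow> t ! i \<in> {0, 1, 2}"
    and "\<And>i. i < r \<Longrightarrow> xs ! i \<in> S (t ! i)" "\<forall>x\<in>set xs. x \<in> ternary_vecs m"
proof -
  have t: "t \<in> ternary_vecs r" using assms(1) admissible_subset[OF AT] by blast
  show len: "length xs = r"
    using assms(2) ternary_vecs_length[OF t] by (simp add: list_all2_lengthD)
  show t_nth: "t ! i \<in> {0, 1, 2}" if "i < r" for i using t that by (rule ternary_vecs_nth)
  show xs_nth: "xs ! i \<in> S (t ! i)" if "i < r" for i
    using assms(2) that len by (simp add: list_all2_conv_all_nth)
  show "\<forall>x\<in>set xs. x \<in> ternary_vecs m"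
    using len t_nth xs_nth meta_extendable_admissible[OF ME] admissible_subset
    by (fastforce simp: in_set_conv_nth)
qed

lemma blocks_length:
  assumes "t \<in> T" "list_all2 (\<lambda>x j. x \<in> S j) xs t"
  shows "\<forall>x\<in>set xs. length x = m"
  using blocksD(4)[OF assms] ternary_vecs_length by blast

lemma blocks_concat_nth:
  assumes "t \<in> T" "list_all2 (\<lambda>x j. x \<in> S j) xs t" "i < r" "k < m"
  shows "concat xs ! (i * m + k) = xs ! i ! k"
  using nth_concat_blocks[OF blocks_length[OF assms(1,2)]] blocksD(1)[OF assms(1,2)] assms(3,4)
  by simp

lemma compose_subset_ternary_vecs: "compose T S \<subseteq> ternary_vecs (m * r)"
proof
  fix u assume "u \<in> compose T S"
  then obtain t xs where xs: "t \<in> T" "list_all2 (\<lambda>x j. x \<in> S j) xs t" "u = concat xs"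
    by (rule composeE)
  have "length u = m * r"
    using xs blocksD(1)[OF xs(1,2)] blocks_length[OF xs(1,2)]
    by (simp add: length_concat sum_list_triv cong: map_cong)
  moreover have "set u \<subseteq> {0, 1, 2}"
    using xs blocksD(4)[OF xs(1,2)] unfolding ternary_vecs_def by auto
  ultimately show "u \<in> ternary_vecs (m * r)" unfolding ternary_vecs_def by blast
qed

lemma compose_zero_nonzero:
  assumes "u \<in> compose T S" "v \<in> compose T S" "u \<noteq> v"
  shows "\<exists>j<m * r. u ! j = 0 \<and> v ! j \<noteq> 0"
proof -
  obtain t xs where xs: "t \<in> T" "list_all2 (\<lambda>x j. x \<in> S j) xs t" "u = concat xs"
    using assms(1) by (rule composeE)
  obtain t' ys where ys: "t' \<in> T" "list_all2 (\<lambda>x j. x \<in> S j) ys t'" "v = concat ys"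
    using assms(2) by (rule composeE)
  note xs_props = blocksD[OF xs(1,2)] and ys_props = blocksD[OF ys(1,2)]
  have "\<exists>i<r. \<exists>k<m. xs ! i ! k = 0 \<and> ys ! i ! k \<noteq> 0"
  proof (cases "t = t'")
    case True
    then have "xs \<noteq> ys" using xs(3) ys(3) assms(3) by blast
    then obtain i where i: "i < r" "xs ! i \<noteq> ys ! i"
      using xs_props(1) ys_props(1) by (auto simp: list_eq_iff_nth_eq)
    have blocks: "xs ! i \<in> S (t ! i)" "ys ! i \<in> S (t ! i)"
      using xs_props(3)[OF i(1)] ys_props(3)[OF i(1)] True by auto
    have "admissible m (S (t ! i))" using meta_extendable_admissible[OF ME xs_props(2)[OF i(1)]] .
    from admissible_zero_nonzero[OF this blocks i(2)] show ?thesis using i(1) by blast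
  next
    case False
    then obtain i where i: "i < r" "t ! i = 0" "t' ! i \<noteq> 0"
      using admissible_zero_nonzero[OF AT xs(1) ys(1)] by blast
    have len: "length (xs ! i) = m" "length (ys ! i) = m"
      using i(1) xs_props(1) ys_props(1) blocks_length[OF xs(1,2)] blocks_length[OF ys(1,2)] by auto
    have "weight (xs ! i) < weight (ys ! i)"
      using i xs_props(3) ys_props(2,3) meta_extendable_weight_less[OF ME] by fastforce
    from weight_less_imp_zero_nonzero[OF _ this] show ?thesis using i(1) len by auto
  qed
  then obtain i k where "i < r" "k < m" "xs ! i ! k = 0" "ys ! i ! k \<noteq> 0" by blast
  then show ?thesis
    using xs ys blocks_concat_nth block_index_less by (intro exI[of _ "i * m + k"]) simp
qed

lemma compose_good3:
  assumes "u \<in> compose T S" "v \<in> compose T S" "w \<in> compose T S" "u \<noteq> v"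
  shows "\<exists>j<m * r. good3 (u ! j) (v ! j) (w ! j)"
proof -
  obtain t xs where xs: "t \<in> T" "list_all2 (\<lambda>x j. x \<in> S j) xs t" "u = concat xs"
    using assms(1) by (rule composeE)
  obtain t' ys where ys: "t' \<in> T" "list_all2 (\<lambda>x j. x \<in> S j) ys t'" "v = concat ys"
    using assms(2) by (rule composeE)
  obtain t'' zs where zs: "t'' \<in> T" "list_all2 (\<lambda>x j. x \<in> S j) zs t''" "w = concat zs"
    using assms(3) by (rule composeE)
  note xs_props = blocksD[OF xs(1,2)] and ys_props = blocksD[OF ys(1,2)]
    and zs_props = blocksD[OF zs(1,2)]
  have "\<exists>i<r. \<exists>k<m. good3 (xs ! i ! k) (ys ! i ! k) (zs ! i ! k)"
  proof (cases "t = t' \<and> t' = t''")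
    case True
    then have "xs \<noteq> ys" using xs(3) ys(3) assms(4) by blast
    then obtain i where i: "i < r" "xs ! i \<noteq> ys ! i"
      using xs_props(1) ys_props(1) by (auto simp: list_eq_iff_nth_eq)
    have blocks: "xs ! i \<in> S (t ! i)" "ys ! i \<in> S (t ! i)" "zs ! i \<in> S (t ! i)"
      using xs_props(3)[OF i(1)] ys_props(3)[OF i(1)] zs_props(3)[OF i(1)] True by auto
    have "admissible m (S (t ! i))" using meta_extendable_admissible[OF ME xs_props(2)[OF i(1)]] .
    from admissible_good3[OF this blocks disjI1[OF i(2)]] show ?thesis using i(1) by blast
  next
    case False
    then have "t \<noteq> t' \<or> t' \<noteq> t''" by blast
    then obtain i where i: "i < r" "good3 (t ! i) (t' ! i) (t'' ! i)"
      using admissible_good3[OF AT xs(1) ys(1) zs(1)] by blast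
    from meta_extendable_good3[OF ME i(2) xs_props(3)[OF i(1)] ys_props(3)[OF i(1)] zs_props(3)[OF i(1)]]
    show ?thesis using i(1) by blast
  qed
  then obtain i k where "i < r" "k < m" "good3 (xs ! i ! k) (ys ! i ! k) (zs ! i ! k)" by blast
  then show ?thesis
    using xs ys zs blocks_concat_nth block_index_less by (intro exI[of _ "i * m + k"]) simp
qed

end

theorem lemma3p6:
  fixes m r :: nat and S :: "nat \<Rightarrow> nat list set" and T :: "nat list set"
  assumes "meta_extendable m S"
    and "admissible r T"
  shows "admissible (m * r) (compose T S)"
  unfolding admissible_def
  using compose_subset_ternary_vecs[OF assms] compose_zero_nonzero[OF assms]
    compose_good3[OF assms] by blast

end
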